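(* There is no flag complex whose $h$-polynomial $h_0+h_1t+\cdots+h_dt^d$ equals $1+3t+3t^2$; that is, no flag complex of dimension $d-1\ge 1$ has $h$-vector $(1,3,3,0,\ldots,0)$. In particular, the face vector $(1,3,3)$ of the boundary of a triangle is not the $h$-vector of any flag complex.
   Context: A flag complex is the independence complex $\mathrm{Ind}(G)$ of a graph $G$ (faces are independent sets). For a $(d-1)$-dimensional complex with face vector $(f_{-1},\ldots,f_{d-1})$ ($f_i$ = number of faces with $i+1$ elements), the $h$-vector is $(h_0,\ldots,h_d)$ with $h_j=\sum_{i=0}^{j}(-1)^{j-i}\binom{d-i}{j-i}f_{i-1}$. *)

theory Defs
  imports Main
begin

text \<open>A finite simple graph is given by a finite vertex set V and a symmetric,
irreflexive edge relation E. The faces of the flag complex Ind(G) are the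
independent sets of G.\<close>

definition indep_sets :: "'a set \<Rightarrow> ('a \<Rightarrow> 'a \<Rightarrow> bool) \<Rightarrow> 'a set set" where
  "indep_sets V E = {S. S \<subseteq> V \<and> (\<forall>x\<in>S. \<forall>y\<in>S. \<not> E x y)}"

text \<open>d = (dimension of Ind(G)) + 1 = maximal size of a face.\<close>
definition ind_d :: "'a set \<Rightarrow> ('a \<Rightarrow> 'a \<Rightarrow> bool) \<Rightarrow> nat" where
  "ind_d V E = Max (card ` indep_sets V E)"

text \<open>face_num V E i = f_{i-1} = number of faces with i elements.\<close>
definition face_num :: "'a set \<Rightarrow> ('a \<Rightarrow> 'a \<Rightarrow> bool) \<Rightarrow> nat \<Rightarrow> nat" where
  "face_num V E i = card {S \<in> indep_sets V E. card S = i}"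

definition h_vec :: "'a set \<Rightarrow> ('a \<Rightarrow> 'a \<Rightarrow> bool) \<Rightarrow> nat \<Rightarrow> int" where
  "h_vec V E j = (\<Sum>i=0..j. (-1) ^ (j - i) * int ((ind_d V E - i) choose (j - i)) * int (face_num V E i))"

end

theory Submission imports Defs begin

(* Let G = (V, E) be a loopless graph whose flag complex Ind(G) has h-vector
   (1, 3, 3, 0, ..., 0) with d = ind_d V E >= 2; write n for the number of vertices, m for the
   number of edges and f_k for the number of faces with k elements.  A k-set is a face unless
   it contains an edge, so f_0 = 1, f_1 = n and f_2 = C(n,2) - m.  Hence h_1 = n - d forces
   n = d + 3, and then h_2 = 6 - m forces m = 3.  If two of the three edges shared a vertex,
   two vertices would cover all edges and their complement would be a face of size n - 2 > d;
   so the edges form a matching.  A matching has 2m <= n, whence d >= 3, and in a matching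
   every 3-set contains at most one edge, so f_3 = C(n,3) - m(n - 2) and h_3 = 10 - 3m = 1,
   contradicting h_3 = 0.
   The file develops edges and face counts, then the vertex-cover bound on d and its
   consequences for three edges, then the closed forms of h_1, h_2, h_3, and finally the
   theorem. *)

definition edges :: "'a set \<Rightarrow> ('a \<Rightarrow> 'a \<Rightarrow> bool) \<Rightarrow> 'a set set" where
  "edges V E = {{x, y} | x y. x \<in> V \<and> y \<in> V \<and> E x y}"

lemma edges_subset: "e \<in> edges V E \<Longrightarrow> e \<subseteq> V"
  unfolding edges_def by auto

lemma finite_edges: "finite V \<Longrightarrow> finite (edges V E)"
  by (rule finite_subset[of _ "Pow V"]) (auto dest: edges_subset)

lemma card_edge:
  assumes "\<And>x. \<not> E x x" and "e \<in> edges V E"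
  shows "card e = 2"
proof -
  obtain x y where "e = {x, y}" and "E x y" using assms(2) unfolding edges_def by blast
  moreover have "x \<noteq> y" using assms(1) \<open>E x y\<close> by metis
  ultimately show ?thesis by simp
qed

lemma indep_sets_iff: "S \<in> indep_sets V E \<longleftrightarrow> S \<subseteq> V \<and> (\<forall>e\<in>edges V E. \<not> e \<subseteq> S)"
proof -
  have "(\<exists>e\<in>edges V E. e \<subseteq> S) \<longleftrightarrow> (\<exists>x\<in>S. \<exists>y\<in>S. E x y)" if "S \<subseteq> V"
    using that unfolding edges_def by auto
  then show ?thesis unfolding indep_sets_def by auto
qed

definition edge_ksets :: "'a set \<Rightarrow> ('a \<Rightarrow> 'a \<Rightarrow> bool) \<Rightarrow> nat \<Rightarrow> 'a set set" where
  "edge_ksets V E k = {S. S \<subseteq> V \<and> card S = k \<and> (\<exists>e\<in>edges V E. e \<subseteq> S)}"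

lemma face_num_complement:
  assumes "finite V"
  shows "int (face_num V E k) = int (card V choose k) - int (card (edge_ksets V E k))"
proof -
  let ?K = "{S. S \<subseteq> V \<and> card S = k}"
  have faces: "{S \<in> indep_sets V E. card S = k} = ?K - edge_ksets V E k"
    unfolding edge_ksets_def indep_sets_iff by blast
  have sub: "edge_ksets V E k \<subseteq> ?K" and fin: "finite ?K"
    using assms unfolding edge_ksets_def by auto
  then have "card (edge_ksets V E k) \<le> card ?K" by (rule card_mono[rotated])
  then show ?thesis
    unfolding face_num_def faces card_Diff_subset[OF finite_subset[OF sub fin] sub]
    using n_subsets[OF assms] by simp
qed

lemma edge_ksets_small:
  assumes "finite V" "\<And>x. \<not> E x x" "k < 2"
  shows "edge_ksets V E k = {}"
proof -
  have False if "S \<subseteq> V" "card S = k" "e \<in> edges V E" "e \<subseteq> S" for S e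
    using card_mono[OF finite_subset[OF that(1) assms(1)] that(4)]
      card_edge[where E=E, OF assms(2) that(3)] that(2) assms(3) by simp
  then show ?thesis unfolding edge_ksets_def by blast
qed

lemma edge_ksets_two:
  assumes "finite V" "\<And>x. \<not> E x x"
  shows "edge_ksets V E 2 = edges V E"
proof (intro equalityI subsetI)
  fix S assume "S \<in> edge_ksets V E 2"
  then obtain e where S: "S \<subseteq> V" "card S = 2" and e: "e \<in> edges V E" "e \<subseteq> S"
    unfolding edge_ksets_def by blast
  have "e = S"
    using card_subset_eq[OF finite_subset[OF S(1) assms(1)] e(2)]
      card_edge[where E=E, OF assms(2) e(1)] S(2) by simp
  then show "S \<in> edges V E" using e(1) by simp
next
  fix e assume "e \<in> edges V E"
  then show "e \<in> edge_ksets V E 2"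
    unfolding edge_ksets_def using card_edge[where E=E, OF assms(2)] edges_subset by blast
qed

text \<open>The 3-subsets of V containing a fixed edge e are the sets e + x with x outside e.\<close>
lemma card_3_supersets_of_edge:
  assumes "finite V" "\<And>x. \<not> E x x" "e \<in> edges V E"
  shows "card {S. S \<subseteq> V \<and> card S = 3 \<and> e \<subseteq> S} = card V - 2"
proof -
  have ce: "card e = 2" using card_edge[where E=E, OF assms(2,3)] .
  then have fe: "finite e" by (intro card_ge_0_finite) simp
  have eV: "e \<subseteq> V" using edges_subset[OF assms(3)] .
  have "S \<in> (\<lambda>x. insert x e) ` (V - e)" if S: "S \<subseteq> V" "card S = 3" "e \<subseteq> S" for S
  proof -
    have "card (S - e) = 1" using S ce card_Diff_subset[OF fe] by simp
    then obtain x where "S - e = {x}" using card_1_singletonE by blast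
    then show ?thesis using S by blast
  qed
  then have "{S. S \<subseteq> V \<and> card S = 3 \<and> e \<subseteq> S} = (\<lambda>x. insert x e) ` (V - e)"
    using eV fe ce by auto
  moreover have "inj_on (\<lambda>x. insert x e) (V - e)" by (rule inj_onI) blast
  ultimately have "card {S. S \<subseteq> V \<and> card S = 3 \<and> e \<subseteq> S} = card (V - e)"
    by (simp add: card_image)
  then show ?thesis using card_Diff_subset[OF fe eV] ce by simp
qed

text \<open>When the edges form a matching, a 3-set contains at most one edge, so the 3-sets
  containing an edge split into m disjoint families of size n - 2.\<close>
lemma card_edge_ksets_three:
  assumes fin: "finite V" and loopless: "\<And>x. \<not> E x x"
    and matching: "pairwise disjnt (edges V E)"
  shows "card (edge_ksets V E 3) = card (edges V E) * (card V - 2)"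
proof -
  let ?F = "\<lambda>e. {S. S \<subseteq> V \<and> card S = 3 \<and> e \<subseteq> S}"
  have disjoint: "?F e \<inter> ?F e' = {}" if "e \<in> edges V E" "e' \<in> edges V E" "e \<noteq> e'" for e e'
  proof (rule ccontr)
    assume "?F e \<inter> ?F e' \<noteq> {}"
    then obtain S where S: "S \<subseteq> V" "card S = 3" "e \<union> e' \<subseteq> S" by blast
    have "card e = 2" "card e' = 2" using card_edge[where E=E, OF loopless] that by auto
    moreover have "disjnt e e'" using matching that unfolding pairwise_def by blast
    ultimately have "card (e \<union> e') = 4"
      by (simp add: card_Un_disjoint disjnt_def card_ge_0_finite)
    moreover have "card (e \<union> e') \<le> card S" using S fin by (meson card_mono finite_subset)
    ultimately show False using S by simp
  qed
  have "edge_ksets V E 3 = (\<Union>e\<in>edges V E. ?F e)"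
    unfolding edge_ksets_def by blast
  also have "card \<dots> = (\<Sum>e\<in>edges V E. card (?F e))"
  proof (rule card_UN_disjoint[OF finite_edges[OF fin]])
    show "\<forall>e\<in>edges V E. finite (?F e)" using fin by simp
  qed (use disjoint in blast)
  finally have "card (edge_ksets V E 3) = (\<Sum>e\<in>edges V E. card (?F e))" .
  also have "\<dots> = (\<Sum>e\<in>edges V E. card V - 2)"
    using card_3_supersets_of_edge[where E=E, OF fin loopless] by (rule sum.cong[OF refl])
  finally show ?thesis by simp
qed

lemma card_le_ind_d:
  assumes "finite V" "S \<in> indep_sets V E"
  shows "card S \<le> ind_d V E"
proof -
  have "indep_sets V E \<subseteq> Pow V" unfolding indep_sets_def by blast
  then have "finite (indep_sets V E)" using assms(1) by (simp add: finite_subset)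
  then show ?thesis unfolding ind_d_def using assms(2) by (intro Max_ge) auto
qed

text \<open>Deleting a vertex cover C leaves a face, so n <= |C| + d.\<close>
lemma vertex_cover_bound:
  assumes "finite V" "finite C" and cover: "\<forall>e\<in>edges V E. e \<inter> C \<noteq> {}"
  shows "card V \<le> card C + ind_d V E"
proof -
  have "V - C \<in> indep_sets V E" unfolding indep_sets_iff using cover by blast
  then have "card (V - C) \<le> ind_d V E" by (rule card_le_ind_d[OF assms(1)])
  moreover have "card V \<le> card (C \<union> (V - C))" using assms(1,2) by (intro card_mono) auto
  moreover have "card (C \<union> (V - C)) \<le> card C + card (V - C)" by (rule card_Un_le)
  ultimately show ?thesis by linarith
qed

text \<open>If G has exactly three edges and more than d + 2 vertices, the edges are pairwise
  disjoint: otherwise a common vertex of two edges and any vertex of the third edge would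
  form a vertex cover of size at most two.\<close>
lemma three_edges_form_matching:
  assumes fin: "finite V" and loopless: "\<And>x. \<not> E x x"
    and three: "card (edges V E) = 3" and many: "ind_d V E + 2 < card V"
  shows "pairwise disjnt (edges V E)"
proof (rule pairwiseI, rule ccontr)
  fix e e'
  assume e: "e \<in> edges V E" and e': "e' \<in> edges V E" and "e \<noteq> e'" and "\<not> disjnt e e'"
  then obtain a where a: "a \<in> e" "a \<in> e'" by (auto simp: disjnt_def)
  have "card (edges V E - {e, e'}) = 1"
    using three e e' \<open>e \<noteq> e'\<close> finite_edges[OF fin] by (simp add: card_Diff_subset)
  then obtain e'' where "edges V E - {e, e'} = {e''}" by (rule card_1_singletonE)
  then have edges_eq: "edges V E = {e, e', e''}" using e e' by blast
  then have "e'' \<in> edges V E" by simp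
  then have "card e'' = 2" by (rule card_edge[where E=E, OF loopless])
  then obtain b where b: "b \<in> e''" by fastforce
  have "\<forall>f\<in>edges V E. f \<inter> {a, b} \<noteq> {}" using edges_eq a b by auto
  then have "card V \<le> card {a, b} + ind_d V E" by (intro vertex_cover_bound[OF fin]) simp_all
  moreover have "card {a, b} \<le> 2" by (cases "a = b") simp_all
  ultimately show False using many by linarith
qed

text \<open>The 2m endpoints of a matching with m edges are distinct vertices.\<close>
lemma card_matching_le:
  assumes fin: "finite V" and loopless: "\<And>x. \<not> E x x"
    and matching: "pairwise disjnt (edges V E)"
  shows "2 * card (edges V E) \<le> card V"
proof -
  have two: "card e = 2" if "e \<in> edges V E" for e
    using card_edge[where E=E, OF loopless that] .
  have "2 * card (edges V E) = sum card (edges V E)" using two by simp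
  also have "\<dots> = card (\<Union>(edges V E))"
    using two by (intro card_Union_disjoint[OF matching, symmetric]) (simp add: card_ge_0_finite)
  also have "\<dots> \<le> card V" using fin edges_subset by (intro card_mono) auto
  finally show ?thesis .
qed

text \<open>Polynomial forms of C(n,2) and C(n,3), valid for all n (both sides vanish for small n).\<close>
lemma choose2_int: "2 * int (n choose 2) = int n * (int n - 1)"
  by (induction n) (auto simp: numeral_2_eq_2 algebra_simps)

lemma choose3_int: "6 * int (n choose 3) = int n * (int n - 1) * (int n - 2)"
proof (induction n)
  case (Suc n)
  have "Suc n choose 3 = (n choose 2) + (n choose 3)" by (simp add: numeral_3_eq_3 numeral_2_eq_2)
  then show ?case using Suc choose2_int[of n] by (simp add: algebra_simps)
qed simp

lemma face_nums_low:
  assumes "finite V" "\<And>x. \<not> E x x"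
  shows "face_num V E 0 = 1" "face_num V E 1 = card V"
    and "int (face_num V E 2) = int (card V choose 2) - int (card (edges V E))"
proof -
  have "int (face_num V E k) = int (card V choose k)" if "k < 2" for k
    using face_num_complement[OF assms(1), of E k] edge_ksets_small[where E=E, OF assms that]
    by simp
  from this[of 0] this[of 1] show "face_num V E 0 = 1" "face_num V E 1 = card V" by simp_all
  show "int (face_num V E 2) = int (card V choose 2) - int (card (edges V E))"
    using face_num_complement[OF assms(1), of E 2] edge_ksets_two[where E=E, OF assms] by simp
qed

text \<open>Since f_0 = 1 and f_1 = n, the entry h_1 = f_1 - d f_0 equals n - d.\<close>
lemma h_vec_1:
  assumes "finite V" "\<And>x. \<not> E x x"
  shows "h_vec V E 1 = int (card V) - int (ind_d V E)"
  using face_nums_low[where E=E, OF assms] by (simp add: h_vec_def)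

text \<open>When n = d + 3, the identity h_2 = C(d,2) - (d-1) n + C(n,2) - m reduces to 6 - m.\<close>
lemma h_vec_2:
  assumes "finite V" "\<And>x. \<not> E x x" "1 \<le> ind_d V E" "card V = ind_d V E + 3"
  shows "h_vec V E 2 = 6 - int (card (edges V E))"
proof -
  define d n m where "d = int (ind_d V E)" "n = int (card V)" "m = int (card (edges V E))"
  have "h_vec V E 2 =
      int (ind_d V E choose 2) - int (ind_d V E - 1) * n + (int (card V choose 2) - m)"
    using face_nums_low[where E=E, OF assms(1,2)]
    by (simp add: h_vec_def eval_nat_numeral d_n_m_def)
  moreover have "int (ind_d V E - 1) = d - 1" "n = d + 3" using assms(3,4) d_n_m_def by auto
  moreover note choose2_int[of "ind_d V E"] choose2_int[of "card V"]
  ultimately show ?thesis unfolding d_n_m_def by (simp add: algebra_simps)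
qed

text \<open>For a matching, f_3 = C(n,3) - m (n - 2); with n = d + 3 the identity
  h_3 = -C(d,3) + C(d-1,2) n - (d-2) f_2 + f_3 then reduces to 10 - 3m.\<close>
lemma h_vec_3:
  assumes fin: "finite V" and loopless: "\<And>x. \<not> E x x"
    and matching: "pairwise disjnt (edges V E)"
    and "2 \<le> ind_d V E" "card V = ind_d V E + 3"
  shows "h_vec V E 3 = 10 - 3 * int (card (edges V E))"
proof -
  define d n m where "d = int (ind_d V E)" "n = int (card V)" "m = int (card (edges V E))"
  have f3: "int (face_num V E 3) = int (card V choose 3) - m * (n - 2)"
    using face_num_complement[OF fin, of E 3]
      card_edge_ksets_three[where E=E, OF fin loopless matching] assms(5) d_n_m_def
    by (simp add: algebra_simps)
  have "h_vec V E 3 = - int (ind_d V E choose 3) + int ((ind_d V E - 1) choose 2) * n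
      - int (ind_d V E - 2) * (int (card V choose 2) - m) + int (face_num V E 3)"
    using face_nums_low[where E=E, OF fin loopless]
    by (simp add: h_vec_def eval_nat_numeral d_n_m_def)
  moreover have "int (ind_d V E - 1) = d - 1" "int (ind_d V E - 2) = d - 2" "n = d + 3"
    using assms(4,5) d_n_m_def by auto
  moreover note choose3_int[of "ind_d V E"] choose2_int[of "ind_d V E - 1"]
    choose2_int[of "card V"] choose3_int[of "card V"]
  ultimately show ?thesis unfolding f3 d_n_m_def by algebra
qed

theorem mainTheorem8:
  fixes V :: "'a set" and E :: "'a \<Rightarrow> 'a \<Rightarrow> bool"
  assumes "finite V"
    and "\<And>x y. E x y \<Longrightarrow> E y x"
    and "\<And>x. \<not> E x x"
  shows "\<not> (2 \<le> ind_d V E \<and> h_vec V E 0 = 1 \<and> h_vec V E 1 = 3 \<and> h_vec V E 2 = 3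
             \<and> (\<forall>j. 3 \<le> j \<and> j \<le> ind_d V E \<longrightarrow> h_vec V E j = 0))"
proof
  assume h: "2 \<le> ind_d V E \<and> h_vec V E 0 = 1 \<and> h_vec V E 1 = 3 \<and> h_vec V E 2 = 3
             \<and> (\<forall>j. 3 \<le> j \<and> j \<le> ind_d V E \<longrightarrow> h_vec V E j = 0)"
  note fin = assms(1) and loopless = assms(3)
  have n: "card V = ind_d V E + 3" using h h_vec_1[where E=E, OF fin loopless] by simp
  have m: "card (edges V E) = 3" using h h_vec_2[where E=E, OF fin loopless _ n] by simp
  have matching: "pairwise disjnt (edges V E)"
    using three_edges_form_matching[where E=E, OF fin loopless m] n by simp
  have "3 \<le> ind_d V E" using card_matching_le[where E=E, OF fin loopless matching] m n by simp
  then have "h_vec V E 3 = 0" using h by simp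
  moreover have "h_vec V E 3 = 1" using h_vec_3[where E=E, OF fin loopless matching _ n] h m by simp
  ultimately show False by simp
qed

end
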